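(* Let $G$ be a graph of order $n\ge 9$. If $\tau(G)\le\frac{n}{2}$ and ${\rm diam}(G)=3$, then $\beta_p(G)\le n-3$.
   Context: All graphs are finite, simple, undirected and connected. Two vertices $u,v$ are twins if $N(u)\setminus\{v\}=N(v)\setminus\{u\}$; the twin number $\tau(G)$ is the maximum cardinality of an equivalence class of the twin relation. For a partition $\Pi=\{S_1,\dots,S_k\}$ of $V(G)$, $r(u|\Pi)=(d(u,S_1),\dots,d(u,S_k))$ with $d(u,S)=\min_{w\in S}d(u,w)$; $\Pi$ is locating if $r(u|\Pi)\ne r(v|\Pi)$ for all distinct $u,v$; $\beta_p(G)$ is the minimum size of a locating partition. *)

theory Defs
  imports Complex_Main "HOL-Library.Disjoint_Sets"
begin

definition edges :: "('a \<Rightarrow> 'a \<Rightarrow> bool) \<Rightarrow> ('a \<times> 'a) set" where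
  "edges E = {(u, v). E u v}"

definition simple_graph :: "'a set \<Rightarrow> ('a \<Rightarrow> 'a \<Rightarrow> bool) \<Rightarrow> bool" where
  "simple_graph V E \<longleftrightarrow> finite V \<and> V \<noteq> {} \<and>
     (\<forall>u v. E u v \<longrightarrow> u \<in> V \<and> v \<in> V) \<and>
     (\<forall>u v. E u v \<longrightarrow> E v u) \<and> (\<forall>u. \<not> E u u)"

definition connected_graph :: "'a set \<Rightarrow> ('a \<Rightarrow> 'a \<Rightarrow> bool) \<Rightarrow> bool" where
  "connected_graph V E \<longleftrightarrow> (\<forall>u\<in>V. \<forall>v\<in>V. (u, v) \<in> (edges E)\<^sup>*)"

definition gdist :: "('a \<Rightarrow> 'a \<Rightarrow> bool) \<Rightarrow> 'a \<Rightarrow> 'a \<Rightarrow> nat" where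
  "gdist E u v = (LEAST k. (u, v) \<in> (edges E) ^^ k)"

definition diam :: "'a set \<Rightarrow> ('a \<Rightarrow> 'a \<Rightarrow> bool) \<Rightarrow> nat" where
  "diam V E = Max {gdist E u v | u v. u \<in> V \<and> v \<in> V}"

definition nbhd :: "('a \<Rightarrow> 'a \<Rightarrow> bool) \<Rightarrow> 'a \<Rightarrow> 'a set" where
  "nbhd E u = {w. E u w}"

definition twins :: "('a \<Rightarrow> 'a \<Rightarrow> bool) \<Rightarrow> 'a \<Rightarrow> 'a \<Rightarrow> bool" where
  "twins E u v \<longleftrightarrow> nbhd E u - {v} = nbhd E v - {u}"

definition twin_class :: "'a set \<Rightarrow> ('a \<Rightarrow> 'a \<Rightarrow> bool) \<Rightarrow> 'a \<Rightarrow> 'a set" where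
  "twin_class V E u = {v \<in> V. twins E u v}"

definition twin_number :: "'a set \<Rightarrow> ('a \<Rightarrow> 'a \<Rightarrow> bool) \<Rightarrow> nat" where
  "twin_number V E = Max ((\<lambda>u. card (twin_class V E u)) ` V)"

definition set_dist :: "('a \<Rightarrow> 'a \<Rightarrow> bool) \<Rightarrow> 'a \<Rightarrow> 'a set \<Rightarrow> nat" where
  "set_dist E u S = Min ((\<lambda>w. gdist E u w) ` S)"

text \<open>Locating partition: the representation vectors r(u|P) (one coordinate per
  class) are pairwise distinct, i.e. distinct vertices differ in the distance to some class.\<close>
definition locating_partition :: "'a set \<Rightarrow> ('a \<Rightarrow> 'a \<Rightarrow> bool) \<Rightarrow> 'a set set \<Rightarrow> bool" where
  "locating_partition V E P \<longleftrightarrow> partition_on V P \<and>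
     (\<forall>u\<in>V. \<forall>v\<in>V. u \<noteq> v \<longrightarrow> (\<exists>S\<in>P. set_dist E u S \<noteq> set_dist E v S))"

definition partition_dim :: "'a set \<Rightarrow> ('a \<Rightarrow> 'a \<Rightarrow> bool) \<Rightarrow> nat" where
  "partition_dim V E = (LEAST k. \<exists>P. locating_partition V E P \<and> card P = k)"

end

theory Submission
  imports Defs
begin

text \<open>Since the diameter is 3 there is a geodesic \<open>a b c d\<close>; let \<open>R\<close> be the remaining
  \<open>n - 4 \<ge> 5\<close> vertices. If some \<open>x, y \<in> R\<close> are told apart by a vertex \<open>w \<notin> {b, c, d}\<close>, then the
  classes \<open>{b, c, d}\<close> (resolved by \<open>a\<close>, at distances 1, 2, 3) and \<open>{x, y}\<close> (resolved by \<open>w\<close>)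
  together with singletons form a locating partition with \<open>n - 3\<close> classes; similarly a
  neighbour \<open>x\<close> of \<open>a\<close> can join \<open>{b, c, d}\<close> unless every \<open>w \<in> R\<close> sees \<open>x\<close> and \<open>b\<close> alike.
  So if \<open>\<beta>\<^sub>p(G) > n - 3\<close>, any two vertices of \<open>R\<close> have the same distances to \<open>a\<close>, to \<open>R\<close>, and
  (by a short case analysis on their distance to \<open>a\<close>) the same adjacency to \<open>b\<close>; applying
  this also to the reversed path \<open>d c b a\<close> shows that \<open>R\<close> consists of mutual twins. Hence
  \<open>n - 4 \<le> \<tau>(G) \<le> n / 2\<close>, i.e. \<open>n \<le> 8\<close>.\<close>

lemma relpow_sym:
  assumes sym: "\<And>u v. E u v \<Longrightarrow> E v u"
  shows "(u, v) \<in> edges E ^^ k \<Longrightarrow> (v, u) \<in> edges E ^^ k"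
proof (induction k arbitrary: u v)
  case 0 then show ?case by (auto elim: relpow_0_E)
next
  case (Suc k)
  obtain y where "(u, y) \<in> edges E" "(y, v) \<in> edges E ^^ k"
    using relpow_Suc_D2[OF Suc.prems] by blast
  then have "(v, y) \<in> edges E ^^ k" "(y, u) \<in> edges E"
    using Suc.IH sym[of u y] by (auto simp: edges_def)
  then show ?case by (rule relpow_Suc_I)
qed

lemma gdist_le: "(u, v) \<in> edges E ^^ k \<Longrightarrow> gdist E u v \<le> k"
  unfolding gdist_def by (rule Least_le)

lemma gdist_self [simp]: "gdist E u u = 0"
  unfolding gdist_def by (rule Least_eq_0) (rule relpow_0_I)

lemma set_dist_singleton [simp]: "set_dist E u {w} = gdist E u w"
  by (simp add: set_dist_def)

lemma set_dist_eq_0: "finite S \<Longrightarrow> u \<in> S \<Longrightarrow> set_dist E u S = 0"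
  unfolding set_dist_def by (intro Min_eqI) (auto intro: image_eqI[where x = u])

locale graph =
  fixes V :: "'a set" and E :: "'a \<Rightarrow> 'a \<Rightarrow> bool"
  assumes simple: "simple_graph V E" and connected: "connected_graph V E"
begin

lemma finite_V: "finite V"
  using simple by (simp add: simple_graph_def)

lemma V_nonempty: "V \<noteq> {}"
  using simple by (simp add: simple_graph_def)

lemma edge_sym: "E u v \<Longrightarrow> E v u"
  using simple by (simp add: simple_graph_def)

lemma edge_irrefl: "\<not> E u u"
  using simple by (simp add: simple_graph_def)

lemma edge_in_V: "E u v \<Longrightarrow> u \<in> V \<and> v \<in> V"
  using simple by (simp add: simple_graph_def)

lemma gdist_walk: "u \<in> V \<Longrightarrow> v \<in> V \<Longrightarrow> (u, v) \<in> edges E ^^ gdist E u v"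
  unfolding gdist_def
  by (rule LeastI_ex) (use connected in \<open>auto simp: connected_graph_def rtrancl_power\<close>)

lemma gdist_sym_le: "u \<in> V \<Longrightarrow> v \<in> V \<Longrightarrow> gdist E v u \<le> gdist E u v"
  using relpow_sym[of E, OF edge_sym gdist_walk] by (rule gdist_le)

lemma gdist_sym: "u \<in> V \<Longrightarrow> v \<in> V \<Longrightarrow> gdist E u v = gdist E v u"
  by (simp add: antisym gdist_sym_le)

lemma gdist_eq_0_iff: "u \<in> V \<Longrightarrow> v \<in> V \<Longrightarrow> gdist E u v = 0 \<longleftrightarrow> u = v"
  using gdist_walk[of u v] by (auto elim: relpow_0_E)

lemma gdist_triangle:
  "u \<in> V \<Longrightarrow> v \<in> V \<Longrightarrow> w \<in> V \<Longrightarrow> gdist E u w \<le> gdist E u v + gdist E v w"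
proof -
  assume "u \<in> V" "v \<in> V" "w \<in> V"
  then have "(u, w) \<in> edges E ^^ (gdist E u v + gdist E v w)"
    using gdist_walk relpow_add by blast
  then show ?thesis by (rule gdist_le)
qed

lemma gdist_eq_1_iff: "u \<in> V \<Longrightarrow> v \<in> V \<Longrightarrow> gdist E u v = 1 \<longleftrightarrow> E u v"
proof
  assume "u \<in> V" "v \<in> V" "gdist E u v = 1"
  then show "E u v" using gdist_walk[of u v] by (simp add: edges_def)
next
  assume uv: "u \<in> V" "v \<in> V" "E u v"
  then have "gdist E u v \<le> 1" by (intro gdist_le) (simp add: edges_def)
  moreover have "u \<noteq> v" using uv edge_irrefl by auto
  ultimately show "gdist E u v = 1" using gdist_eq_0_iff uv by fastforce
qed

lemma gdist_Suc_neighbour: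
  assumes "u \<in> V" "v \<in> V" "gdist E u v = Suc k"
  obtains w where "E u w" "gdist E w v = k"
proof -
  obtain w where w: "(u, w) \<in> edges E" "(w, v) \<in> edges E ^^ k"
    using gdist_walk[OF assms(1,2)] assms(3) relpow_Suc_D2 by metis
  then have "E u w" "w \<in> V" using edge_in_V by (auto simp: edges_def)
  then have "gdist E u v \<le> 1 + gdist E w v"
    using gdist_triangle[of u w v] gdist_eq_1_iff[of u w] assms by simp
  moreover have "gdist E w v \<le> k" using w(2) by (rule gdist_le)
  ultimately show thesis using that \<open>E u w\<close> assms(3) by force
qed

lemma diam_attained:
  obtains u v where "u \<in> V" "v \<in> V" "gdist E u v = diam V E"
proof -
  have "finite {gdist E u v | u v. u \<in> V \<and> v \<in> V}"
    using finite_V by (simp add: finite_image_set2)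
  moreover have "{gdist E u v | u v. u \<in> V \<and> v \<in> V} \<noteq> {}" using V_nonempty by blast
  ultimately show thesis using Max_in that unfolding diam_def by fastforce
qed

lemma set_dist_eq_0_iff:
  assumes "finite S" "S \<noteq> {}" "S \<subseteq> V" "v \<in> V"
  shows "set_dist E v S = 0 \<longleftrightarrow> v \<in> S"
proof
  assume "set_dist E v S = 0"
  moreover have "set_dist E v S \<in> (\<lambda>w. gdist E v w) ` S"
    unfolding set_dist_def using assms by (intro Min_in) auto
  ultimately obtain w where "w \<in> S" "gdist E v w = 0" by auto
  then show "v \<in> S" using assms gdist_eq_0_iff[of v w] by auto
qed (rule set_dist_eq_0[OF assms(1)])

lemma partition_dim_le_classes_and_singletons:
  assumes classes: "\<And>C. C \<in> Q \<Longrightarrow> C \<subseteq> V \<and> C \<noteq> {}"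
    and disjoint: "\<And>C C'. C \<in> Q \<Longrightarrow> C' \<in> Q \<Longrightarrow> C \<noteq> C' \<Longrightarrow> C \<inter> C' = {}"
    and resolved: "\<And>C x y. C \<in> Q \<Longrightarrow> x \<in> C \<Longrightarrow> y \<in> C \<Longrightarrow> x \<noteq> y \<Longrightarrow>
                      \<exists>w\<in>V - \<Union>Q. gdist E x w \<noteq> gdist E y w"
  shows "partition_dim V E \<le> card Q + card (V - \<Union>Q)"
proof -
  define P where "P = Q \<union> (\<lambda>w. {w}) ` (V - \<Union>Q)"
  have P_classes: "\<And>S. S \<in> P \<Longrightarrow> S \<subseteq> V \<and> S \<noteq> {} \<and> finite S"
    using classes finite_V by (auto simp: P_def intro: finite_subset)
  have P_cover: "\<And>u. u \<in> V \<Longrightarrow> \<exists>S\<in>P. u \<in> S"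
    unfolding P_def by auto
  have "partition_on V P"
  proof (rule partition_onI)
    show "\<Union>P = V" using P_classes P_cover by blast
    show "\<And>S S'. S \<in> P \<Longrightarrow> S' \<in> P \<Longrightarrow> S \<noteq> S' \<Longrightarrow> disjnt S S'"
      unfolding P_def disjnt_def using disjoint by blast
    show "{} \<notin> P" using P_classes by blast
  qed
  moreover have "\<exists>S\<in>P. set_dist E u S \<noteq> set_dist E v S"
    if uv: "u \<in> V" "v \<in> V" "u \<noteq> v" for u v
  proof -
    obtain S where S: "S \<in> P" "u \<in> S" using P_cover uv by blast
    show ?thesis
    proof (cases "v \<in> S")
      case False
      then have "set_dist E u S = 0" "set_dist E v S \<noteq> 0"
        using S P_classes[OF S(1)] uv set_dist_eq_0_iff[of S u] set_dist_eq_0_iff[of S v] by auto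
      then show ?thesis by (intro bexI[OF _ S(1)]) simp
    next
      case True
      then have "S \<in> Q" using S uv by (auto simp: P_def)
      then obtain w where "w \<in> V - \<Union>Q" "gdist E u w \<noteq> gdist E v w"
        using resolved S True uv by blast
      then show ?thesis by (intro bexI[of _ "{w}"]) (auto simp: P_def)
    qed
  qed
  ultimately have "partition_dim V E \<le> card P"
    unfolding partition_dim_def by (intro Least_le) (auto simp: locating_partition_def)
  also have "\<dots> \<le> card Q + card ((\<lambda>w. {w}) ` (V - \<Union>Q))"
    unfolding P_def by (rule card_Un_le)
  also have "\<dots> \<le> card Q + card (V - \<Union>Q)"
    using card_image_le finite_V by auto
  finally show ?thesis .
qed

lemma card_le_twin_number:
  assumes "x \<in> V" "R \<subseteq> V" "\<And>y. y \<in> R \<Longrightarrow> twins E x y"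
  shows "card R \<le> twin_number V E"
proof -
  have "card R \<le> card (twin_class V E x)"
    using assms finite_V by (intro card_mono) (auto simp: twin_class_def)
  also have "\<dots> \<le> twin_number V E"
    unfolding twin_number_def using finite_V assms(1) by (intro Max_ge) auto
  finally show ?thesis .
qed

end

locale geodesic3 = graph +
  fixes a b c d :: 'a
  assumes edge_ab: "E a b" and edge_bc: "E b c" and edge_cd: "E c d"
    and gdist_ad: "gdist E a d = 3"
begin

lemma path_in_V: "a \<in> V" "b \<in> V" "c \<in> V" "d \<in> V"
  using edge_ab edge_cd edge_in_V by auto

lemma path_gdist:
  "gdist E a b = 1" "gdist E b c = 1" "gdist E c d = 1"
  "gdist E a c = 2" "gdist E b d = 2" "gdist E a d = 3"
proof -
  show ab: "gdist E a b = 1" and bc: "gdist E b c = 1" and cd: "gdist E c d = 1"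
    using edge_ab edge_bc edge_cd path_in_V gdist_eq_1_iff by auto
  show "gdist E a d = 3" by (fact gdist_ad)
  have "gdist E a d \<le> gdist E a c + gdist E c d" "gdist E a c \<le> gdist E a b + gdist E b c"
    "gdist E a d \<le> gdist E a b + gdist E b d" "gdist E b d \<le> gdist E b c + gdist E c d"
    using gdist_triangle path_in_V by blast+
  then show "gdist E a c = 2" "gdist E b d = 2" using ab bc cd gdist_ad by simp_all
qed

lemma path_distinct: "a \<noteq> b" "a \<noteq> c" "a \<noteq> d" "b \<noteq> c" "b \<noteq> d" "c \<noteq> d"
  using path_gdist by auto

lemma path_gdist_to_a: "gdist E b a = 1" "gdist E c a = 2" "gdist E d a = 3"
  using path_gdist path_in_V gdist_sym by metis+

lemma geodesic3_reverse: "geodesic3 V E d c b a"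
  by unfold_locales
    (use edge_ab edge_bc edge_cd edge_sym path_gdist_to_a in auto)

definition inner :: "'a set" where
  "inner = V - {a, b, c, d}"

lemma inner_iff: "x \<in> inner \<longleftrightarrow> x \<in> V \<and> x \<noteq> a \<and> x \<noteq> b \<and> x \<noteq> c \<and> x \<noteq> d"
  by (auto simp: inner_def)

lemma card_inner: "card inner = card V - 4"
  unfolding inner_def using finite_V path_in_V path_distinct by (subst card_Diff_subset) auto

lemma partition_dim_le_if_inner_pair_resolved:
  assumes xy: "x \<in> inner" "y \<in> inner" "x \<noteq> y"
    and w: "w \<in> V - {b, c, d, x, y}" "gdist E x w \<noteq> gdist E y w"
  shows "partition_dim V E \<le> card V - 3"
proof -
  let ?Q = "{{b, c, d}, {x, y}}"
  have outside: "V - \<Union>?Q = V - {b, c, d, x, y}" by auto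
  have "card {b, c, d, x, y} = 5"
    using xy path_distinct by (auto simp: inner_iff card_insert_if)
  moreover have "card {b, c, d, x, y} \<le> card V"
    using xy path_in_V by (intro card_mono finite_V) (auto simp: inner_iff)
  ultimately have five: "card {b, c, d, x, y} = 5" "5 \<le> card V" by auto
  have a_out: "a \<in> V - \<Union>?Q" using xy path_in_V path_distinct by (auto simp: inner_def)
  have "partition_dim V E \<le> card ?Q + card (V - \<Union>?Q)"
  proof (rule partition_dim_le_classes_and_singletons)
    fix C assume "C \<in> ?Q"
    then show "C \<subseteq> V \<and> C \<noteq> {}" using xy path_in_V by (auto simp: inner_def)
  next
    fix C C' assume "C \<in> ?Q" "C' \<in> ?Q" "C \<noteq> C'"
    then show "C \<inter> C' = {}" using xy by (auto simp: inner_def)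
  next
    fix C u v assume C: "C \<in> ?Q" "u \<in> C" "v \<in> C" "u \<noteq> v"
    show "\<exists>z\<in>V - \<Union>?Q. gdist E u z \<noteq> gdist E v z"
    proof (cases "C = {x, y}")
      case True
      then show ?thesis using C w by (intro bexI[of _ w]) auto
    next
      case False
      then show ?thesis using C a_out path_gdist_to_a by (intro bexI[of _ a]) auto
    qed
  qed
  also have "card ?Q = 2" using xy by (auto simp: inner_iff card_insert_if)
  also have "card (V - \<Union>?Q) = card V - card {b, c, d, x, y}"
    unfolding outside using xy path_in_V by (intro card_Diff_subset) (auto simp: inner_iff)
  finally show ?thesis using five by simp
qed

lemma partition_dim_le_if_neighbour_resolved:
  assumes x: "x \<in> inner" "E x a"
    and w: "w \<in> inner" "w \<noteq> x" "gdist E w x \<noteq> gdist E w b"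
  shows "partition_dim V E \<le> card V - 3"
proof -
  let ?Q = "{{b, c, d, x}}"
  have "card {b, c, d, x} = 4"
    using x path_distinct by (auto simp: inner_iff card_insert_if)
  moreover have "card {b, c, d, x} \<le> card V"
    using x path_in_V by (intro card_mono finite_V) (auto simp: inner_iff)
  ultimately have four: "card {b, c, d, x} = 4" "4 \<le> card V" by auto
  have a_out: "a \<in> V - \<Union>?Q" using x path_in_V path_distinct by (auto simp: inner_def)
  have xa: "gdist E x a = 1" using x path_in_V gdist_eq_1_iff by (auto simp: inner_iff)
  have "partition_dim V E \<le> card ?Q + card (V - \<Union>?Q)"
  proof (rule partition_dim_le_classes_and_singletons)
    fix C assume "C \<in> ?Q"
    then show "C \<subseteq> V \<and> C \<noteq> {}" using x path_in_V by (auto simp: inner_def)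
  next
    fix C C' assume "C \<in> ?Q" "C' \<in> ?Q" "C \<noteq> C'"
    then show "C \<inter> C' = {}" by auto
  next
    fix C u v assume C: "C \<in> ?Q" "u \<in> C" "v \<in> C" "u \<noteq> v"
    show "\<exists>z\<in>V - \<Union>?Q. gdist E u z \<noteq> gdist E v z"
    proof (cases "{u, v} = {x, b}")
      case True
      have "gdist E x w \<noteq> gdist E b w"
        using w x path_in_V gdist_sym by (metis inner_iff)
      then show ?thesis using True w by (intro bexI[of _ w]) (auto simp: inner_iff doubleton_eq_iff)
    next
      case False
      then show ?thesis using C a_out xa path_gdist_to_a by (intro bexI[of _ a]) auto
    qed
  qed
  also have "card (V - \<Union>?Q) = card V - card {b, c, d, x}"
    using x path_in_V by (subst card_Diff_subset) (auto simp: inner_iff)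
  finally show ?thesis using four by simp
qed

lemma not_adjacent_b_if_far_from_a:
  assumes "r \<in> V" "3 \<le> gdist E r a"
  shows "\<not> E r b"
proof
  assume "E r b"
  then have "gdist E r b = 1" using assms(1) path_in_V gdist_eq_1_iff by blast
  then have "gdist E r a \<le> 2"
    using gdist_triangle[of r b a] assms(1) path_in_V path_gdist_to_a by simp
  then show False using assms(2) by simp
qed

context
  assumes large: "card V - 3 < partition_dim V E"
begin

lemma inner_gdist_eq:
  assumes x: "x \<in> inner" and y: "y \<in> inner" and w: "w \<in> V - {b, c, d, x, y}"
  shows "gdist E x w = gdist E y w"
proof (rule ccontr)
  assume ne: "gdist E x w \<noteq> gdist E y w"
  then have "x \<noteq> y" by auto
  then show False
    using partition_dim_le_if_inner_pair_resolved[OF x y _ w ne] large by simp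
qed

lemma inner_gdist_to_a_eq: "x \<in> inner \<Longrightarrow> y \<in> inner \<Longrightarrow> gdist E x a = gdist E y a"
  using path_in_V path_distinct by (intro inner_gdist_eq) (auto simp: inner_iff)

lemma inner_gdist_eq_via_neighbour:
  assumes x: "x \<in> inner" "E x a" and w: "w \<in> inner" "w \<noteq> x"
  shows "gdist E w x = gdist E w b"
  using partition_dim_le_if_neighbour_resolved[OF x w] large
  by (cases "gdist E w x = gdist E w b") simp_all

lemma inner_adjacent_b_if_gdist_2:
  assumes r: "r \<in> inner" "gdist E r a = 2"
  shows "E r b"
proof -
  have rV: "r \<in> V" using r by (simp add: inner_iff)
  obtain w where w: "E r w" "gdist E w a = 1"
    using gdist_Suc_neighbour[of r a 1] r rV path_in_V by auto
  have "w \<in> V" using w edge_in_V by blast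
  have "w \<notin> inner" using inner_gdist_to_a_eq[of w r] r w by auto
  moreover have "w \<noteq> a" "w \<noteq> c" "w \<noteq> d" using w path_gdist_to_a by auto
  ultimately have "w = b" using \<open>w \<in> V\<close> by (auto simp: inner_iff)
  then show ?thesis using w by simp
qed

lemma inner_adjacent_b_iff:
  assumes x: "x \<in> inner" and y: "y \<in> inner"
  shows "E x b \<longleftrightarrow> E y b"
proof (cases "x = y")
  case False
  have xV: "x \<in> V" and yV: "y \<in> V" using x y by (auto simp: inner_iff)
  have same: "gdist E x a = gdist E y a" using inner_gdist_to_a_eq x y by blast
  have "gdist E x a \<noteq> 0" using xV path_in_V gdist_eq_0_iff x by (auto simp: inner_iff)
  then consider "gdist E x a = 1" | "gdist E x a = 2" | "3 \<le> gdist E x a" by linarith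
  then show ?thesis
  proof cases
    case 1
    then have "E x a" "E y a" using same xV yV path_in_V gdist_eq_1_iff by auto
    then have "gdist E y x = gdist E y b" "gdist E x y = gdist E x b"
      using inner_gdist_eq_via_neighbour x y False by auto
    then have "gdist E x b = gdist E y b" using gdist_sym[OF xV yV] by simp
    then show ?thesis using gdist_eq_1_iff[OF xV path_in_V(2)] gdist_eq_1_iff[OF yV path_in_V(2)]
      by simp
  next
    case 2
    then show ?thesis using inner_adjacent_b_if_gdist_2[OF x] inner_adjacent_b_if_gdist_2[OF y] same
      by simp
  next
    case 3
    then show ?thesis using not_adjacent_b_if_far_from_a[OF xV] not_adjacent_b_if_far_from_a[OF yV] same
      by simp
  qed
qed simp

lemma inner_adjacent_iff:
  assumes x: "x \<in> inner" and y: "y \<in> inner" and w: "w \<notin> {c, d, x, y}"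
  shows "E x w \<longleftrightarrow> E y w"
proof -
  have xV: "x \<in> V" and yV: "y \<in> V" using x y by (auto simp: inner_iff)
  consider "w \<notin> V" | "w = b" | "w \<in> V - {b, c, d, x, y}" using w by auto
  then show ?thesis
  proof cases
    case 1
    then show ?thesis using edge_in_V[of x w] edge_in_V[of y w] by blast
  next
    case 2
    then show ?thesis using inner_adjacent_b_iff[OF x y] by simp
  next
    case 3
    then have "w \<in> V" "gdist E x w = gdist E y w" using inner_gdist_eq[OF x y 3] by auto
    then show ?thesis using gdist_eq_1_iff[OF xV \<open>w \<in> V\<close>] gdist_eq_1_iff[OF yV \<open>w \<in> V\<close>] by simp
  qed
qed

end

lemma inner_twins:
  assumes large: "card V - 3 < partition_dim V E" and x: "x \<in> inner" and y: "y \<in> inner"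
  shows "twins E x y"
proof -
  interpret rev: geodesic3 V E d c b a by (rule geodesic3_reverse)
  have x': "x \<in> rev.inner" and y': "y \<in> rev.inner"
    using x y by (auto simp: inner_def rev.inner_def)
  have "E x w \<longleftrightarrow> E y w" if w: "w \<notin> {x, y}" for w
  proof (cases "w \<in> {c, d}")
    case True
    then have "w \<notin> {b, a, x, y}" using w path_distinct by auto
    then show ?thesis using rev.inner_adjacent_iff[OF large x' y'] by simp
  next
    case False
    then show ?thesis using inner_adjacent_iff[OF large x y] w by simp
  qed
  then have "E x w \<and> w \<noteq> y \<longleftrightarrow> E y w \<and> w \<noteq> x" for w
    using edge_irrefl by (cases "w \<in> {x, y}") auto
  then show ?thesis unfolding twins_def nbhd_def by blast
qed

end

context graph
begin

lemma geodesic3_if_diam_3: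
  assumes "diam V E = 3"
  obtains a b c d where "geodesic3 V E a b c d"
proof -
  obtain a d where ad: "a \<in> V" "d \<in> V" "gdist E a d = 3"
    using diam_attained assms by metis
  then obtain b where b: "E a b" "gdist E b d = 2"
    using gdist_Suc_neighbour[of a d 2] by auto
  then have "b \<in> V" using edge_in_V by blast
  then obtain c where c: "E b c" "gdist E c d = 1"
    using gdist_Suc_neighbour[of b d 1] ad b by auto
  then have "E c d" using edge_in_V ad gdist_eq_1_iff by blast
  then have "geodesic3 V E a b c d"
    using ad b c by unfold_locales
  then show thesis by (rule that)
qed

theorem partition_dim_le_if_diam_3:
  assumes order: "card V \<ge> 9" and twin: "real (twin_number V E) \<le> real (card V) / 2"
    and diam: "diam V E = 3"
  shows "partition_dim V E \<le> card V - 3"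
proof (rule ccontr)
  assume "\<not> partition_dim V E \<le> card V - 3"
  then have large: "card V - 3 < partition_dim V E" by simp
  obtain a b c d where "geodesic3 V E a b c d" using geodesic3_if_diam_3 diam by blast
  then interpret geodesic3 V E a b c d .
  have "inner \<noteq> {}" using card_inner order by auto
  then obtain x where x: "x \<in> inner" by blast
  have "card inner \<le> twin_number V E"
    using x inner_twins[OF large x] by (intro card_le_twin_number) (auto simp: inner_def)
  then show False using twin order card_inner by simp
qed

end

theorem proposition12:
  fixes V :: "'a set" and E :: "'a \<Rightarrow> 'a \<Rightarrow> bool"
  assumes "simple_graph V E" and "connected_graph V E"
    and "card V \<ge> 9"
    and "real (twin_number V E) \<le> real (card V) / 2"
    and "diam V E = 3"
  shows "partition_dim V E \<le> card V - 3"
proof -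
  interpret graph V E using assms(1,2) by unfold_locales
  show ?thesis using assms(3-5) by (rule partition_dim_le_if_diam_3)
qed

end
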